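(* For $k\geq 1$ let $p(k)$ be the probability that two independent uniformly random permutations $\sigma,\sigma'\in S_{2k}$, each of cycle type $(2^k)$ (i.e. fixed-point-free involutions), generate a transitive subgroup of $S_{2k}$. Then $p(k)\asymp k^{-1/2}$, i.e. there are absolute constants $0<a<b$ with $a k^{-1/2}\leq p(k)\leq b k^{-1/2}$ for all $k\geq 1$. *)

theory Defs
  imports "HOL-Combinatorics.Permutations" Complex_Main
begin

definition fpf_involutions :: "nat \<Rightarrow> (nat \<Rightarrow> nat) set" where
  "fpf_involutions n = {s. s permutes {0..<n} \<and> (\<forall>i<n. s i \<noteq> i \<and> s (s i) = i)}"

inductive_set generated_group :: "(nat \<Rightarrow> nat) set \<Rightarrow> (nat \<Rightarrow> nat) set"
  for S :: "(nat \<Rightarrow> nat) set" where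
  gen_id: "id \<in> generated_group S"
| gen_mult: "g \<in> generated_group S \<Longrightarrow> s \<in> S \<Longrightarrow> s \<circ> g \<in> generated_group S"
| gen_inv: "g \<in> generated_group S \<Longrightarrow> s \<in> S \<Longrightarrow> inv s \<circ> g \<in> generated_group S"

definition transitive_on :: "nat \<Rightarrow> (nat \<Rightarrow> nat) set \<Rightarrow> bool" where
  "transitive_on n G \<longleftrightarrow> (\<forall>i<n. \<forall>j<n. \<exists>g\<in>G. g i = j)"

definition p_trans :: "nat \<Rightarrow> real" where
  "p_trans k = real (card {(s, t). s \<in> fpf_involutions (2*k) \<and> t \<in> fpf_involutions (2*k)
        \<and> transitive_on (2*k) (generated_group {s, t})})
     / (real (card (fpf_involutions (2*k)))) ^ 2"

end

theory Submission
  imports Defs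
begin

(* Two fixed-point-free involutions s, t of a 2k-set generate a transitive group iff the graph
   formed by the 2-cycles of s and of t is connected, i.e. is one alternating cycle of length 2k.
   Deleting a point m and its partner a = s m and replacing the t-path  t m, m, a, t a  by a single
   t-edge from t m to t a is a (2k-1)(2k-2)-to-one map from transitive pairs on 2k points onto
   transitive pairs on 2k-2 points. So there are (2k-1)! transitive pairs among ((2k-1)!!)^2 pairs,
   p(k) = (2k-2)!!/(2k-1)!!, and an induction on k traps p(k)^2 between 1/(2k-1) and 1/k. *)

definition fpf_involutions_on :: "'a set \<Rightarrow> ('a \<Rightarrow> 'a) set" where
  "fpf_involutions_on A = {s. s permutes A \<and> (\<forall>x\<in>A. s x \<noteq> x \<and> s (s x) = x)}"

lemma fpf_involutions_eq: "fpf_involutions n = fpf_involutions_on {0..<n}"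
  unfolding fpf_involutions_def fpf_involutions_on_def by auto

lemma fpf_involutions_on_iff:
  "s \<in> fpf_involutions_on A \<longleftrightarrow>
     (\<forall>x. x \<notin> A \<longrightarrow> s x = x) \<and> (\<forall>x\<in>A. s x \<noteq> x) \<and> (\<forall>x. s (s x) = x)"
proof
  assume "s \<in> fpf_involutions_on A"
  then have "s permutes A" and "\<forall>x\<in>A. s x \<noteq> x \<and> s (s x) = x"
    by (auto simp: fpf_involutions_on_def)
  then show "(\<forall>x. x \<notin> A \<longrightarrow> s x = x) \<and> (\<forall>x\<in>A. s x \<noteq> x) \<and> (\<forall>x. s (s x) = x)"
    by (metis permutes_not_in)
next
  assume s: "(\<forall>x. x \<notin> A \<longrightarrow> s x = x) \<and> (\<forall>x\<in>A. s x \<noteq> x) \<and> (\<forall>x. s (s x) = x)"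
  have "s permutes A"
    unfolding permutes_def
  proof (intro conjI allI impI)
    fix y show "\<exists>!x. s x = y" using s by metis
  qed (use s in auto)
  with s show "s \<in> fpf_involutions_on A"
    by (auto simp: fpf_involutions_on_def)
qed

lemma fpf_involution_outside: "s \<in> fpf_involutions_on A \<Longrightarrow> x \<notin> A \<Longrightarrow> s x = x"
  and fpf_involution_ne: "s \<in> fpf_involutions_on A \<Longrightarrow> x \<in> A \<Longrightarrow> s x \<noteq> x"
  and fpf_involution_twice: "s \<in> fpf_involutions_on A \<Longrightarrow> s (s x) = x"
  by (simp_all add: fpf_involutions_on_iff)

lemma fpf_involution_in:
  "s \<in> fpf_involutions_on A \<Longrightarrow> x \<in> A \<Longrightarrow> s x \<in> A"
  unfolding fpf_involutions_on_iff by metis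

lemma fpf_involution_comp_self:
  "s \<in> fpf_involutions_on A \<Longrightarrow> s \<circ> s = id"
  unfolding fpf_involutions_on_iff by auto

lemma fpf_involutions_on_remove_2cycle:
  assumes "s \<in> fpf_involutions_on A"
  shows "s(m := m, s m := s m) \<in> fpf_involutions_on (A - {m, s m})"
  using assms unfolding fpf_involutions_on_iff by (auto simp: fun_upd_def) metis

lemma fpf_involutions_on_add_2cycle:
  assumes "s \<in> fpf_involutions_on (A - {m, a})" and "m \<in> A" "a \<in> A" "a \<noteq> m"
  shows "s(m := a, a := m) \<in> fpf_involutions_on A"
  using assms unfolding fpf_involutions_on_iff by (auto simp: fun_upd_def)

lemma bij_betw_fpf_involutions_on:
  assumes m: "m \<in> A"
  shows "bij_betw (\<lambda>s. (s m, s(m := m, s m := s m))) (fpf_involutions_on A)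
           (SIGMA a:A-{m}. fpf_involutions_on (A - {m, a}))"
proof (rule bij_betw_byWitness[where f' = "\<lambda>(a, s). s(m := a, a := m)"])
  show "\<forall>s\<in>fpf_involutions_on A. (\<lambda>(a, s'). s'(m := a, a := m)) (s m, s(m := m, s m := s m)) = s"
  proof
    fix s assume "s \<in> fpf_involutions_on A"
    then have "s (s m) = m" by (rule fpf_involution_twice)
    then show "(\<lambda>(a, s'). s'(m := a, a := m)) (s m, s(m := m, s m := s m)) = s"
      by (auto simp: fun_eq_iff)
  qed
  show "\<forall>p\<in>(SIGMA a:A-{m}. fpf_involutions_on (A - {m, a})).
          (\<lambda>s. (s m, s(m := m, s m := s m))) ((\<lambda>(a, s). s(m := a, a := m)) p) = p"
    by (auto simp: fpf_involutions_on_iff fun_eq_iff)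
  show "(\<lambda>s. (s m, s(m := m, s m := s m))) ` fpf_involutions_on A
          \<subseteq> (SIGMA a:A-{m}. fpf_involutions_on (A - {m, a}))"
  proof (rule image_subsetI)
    fix s assume s: "s \<in> fpf_involutions_on A"
    then have "s m \<in> A - {m}"
      using m fpf_involution_in fpf_involution_ne by fastforce
    with s show "(s m, s(m := m, s m := s m)) \<in> (SIGMA a:A-{m}. fpf_involutions_on (A - {m, a}))"
      by (simp add: fpf_involutions_on_remove_2cycle)
  qed
  show "(\<lambda>(a, s). s(m := a, a := m)) ` (SIGMA a:A-{m}. fpf_involutions_on (A - {m, a}))
          \<subseteq> fpf_involutions_on A"
    using m by (auto intro!: fpf_involutions_on_add_2cycle)
qed

lemma card_fpf_involutions_on:
  "finite A \<Longrightarrow> card A = 2 * k \<Longrightarrow> card (fpf_involutions_on A) = (\<Prod>i<k. 2 * i + 1)"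
proof (induction k arbitrary: A)
  case 0
  then have "fpf_involutions_on A = {id}"
    by (auto simp: fpf_involutions_on_iff fun_eq_iff)
  then show ?case by simp
next
  case (Suc k)
  then obtain m where m: "m \<in> A" by fastforce
  have IH: "card (fpf_involutions_on (A - {m, a})) = (\<Prod>i<k. 2 * i + 1)" if "a \<in> A - {m}" for a
    using Suc that m by (intro Suc.IH) (auto simp: card_Diff_subset)
  have "card (fpf_involutions_on A) = card (SIGMA a:A-{m}. fpf_involutions_on (A - {m, a}))"
    using bij_betw_same_card[OF bij_betw_fpf_involutions_on[OF m]] .
  also have "\<dots> = (\<Sum>a\<in>A-{m}. \<Prod>i<k. 2 * i + 1)"
    using Suc.prems IH by (subst card_SigmaI) (auto intro: card_ge_0_finite)
  also have "\<dots> = (2 * k + 1) * (\<Prod>i<k. 2 * i + 1)"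
    using Suc.prems m by simp
  finally show ?case by simp
qed

definition steps :: "('a \<Rightarrow> 'a) set \<Rightarrow> ('a \<times> 'a) set" where
  "steps S = {(x, s x) | x s. s \<in> S}"

lemma in_steps_iff [simp]: "(x, y) \<in> steps S \<longleftrightarrow> (\<exists>s\<in>S. y = s x)"
  by (auto simp: steps_def)

definition connects :: "'a set \<Rightarrow> ('a \<Rightarrow> 'a) set \<Rightarrow> bool" where
  "connects A S \<longleftrightarrow> (\<forall>x\<in>A. \<forall>y\<in>A. (x, y) \<in> (steps S)\<^sup>*)"

definition transitive_pairs :: "'a set \<Rightarrow> (('a \<Rightarrow> 'a) \<times> ('a \<Rightarrow> 'a)) set" where
  "transitive_pairs A =
     {(s, t). s \<in> fpf_involutions_on A \<and> t \<in> fpf_involutions_on A \<and> connects A {s, t}}"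

lemma generated_group_orbit_iff:
  assumes invol: "\<forall>s\<in>S. s \<circ> s = id"
  shows "(\<exists>g\<in>generated_group S. g x = y) \<longleftrightarrow> (x, y) \<in> (steps S)\<^sup>*"
proof
  assume "\<exists>g\<in>generated_group S. g x = y"
  then obtain g where "g \<in> generated_group S" "g x = y" by blast
  moreover have "(x, g x) \<in> (steps S)\<^sup>*" if "g \<in> generated_group S" for g
    using that
  proof (induction rule: generated_group.induct)
    case gen_id
    then show ?case by simp
  next
    case (gen_mult g s)
    then have "(g x, s (g x)) \<in> steps S" by auto
    with gen_mult.IH show ?case by (simp add: rtrancl_into_rtrancl)
  next
    case (gen_inv g s)
    then have "inv s = s"
      using invol by (simp add: inv_unique_comp)
    moreover have "(g x, s (g x)) \<in> steps S" using gen_inv by auto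
    ultimately show ?case using gen_inv.IH by (simp add: rtrancl_into_rtrancl)
  qed
  ultimately show "(x, y) \<in> (steps S)\<^sup>*" by blast
next
  assume "(x, y) \<in> (steps S)\<^sup>*"
  then show "\<exists>g\<in>generated_group S. g x = y"
  proof (induction rule: rtrancl_induct)
    case base
    show ?case using generated_group.gen_id by (metis id_apply)
  next
    case (step y z)
    then obtain g s where "g \<in> generated_group S" "g x = y" "s \<in> S" "z = s y" by auto
    then have "s \<circ> g \<in> generated_group S" "(s \<circ> g) x = z"
      by (auto intro: generated_group.gen_mult)
    then show ?case by blast
  qed
qed

lemma transitive_on_generated_group_iff:
  assumes "\<forall>s\<in>S. s \<circ> s = id"
  shows "transitive_on n (generated_group S) \<longleftrightarrow> connects {0..<n} S"
  using generated_group_orbit_iff[OF assms] by (auto simp: transitive_on_def connects_def)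

lemma rtrancl_map:
  assumes "(x, y) \<in> r\<^sup>*" and "\<And>x y. (x, y) \<in> r \<Longrightarrow> (f x, f y) \<in> r'\<^sup>*"
  shows "(f x, f y) \<in> r'\<^sup>*"
  using assms(1) by induction (auto intro: rtrancl_trans assms(2))

(* With a = s m, the cycle of the pair (s, t) runs through  t m, m, a, t a.  shortcut m a t drops
   m and a from it and joins t m to t a; detour m a b t re-inserts m and a between b and t b. *)
definition shortcut :: "'a \<Rightarrow> 'a \<Rightarrow> ('a \<Rightarrow> 'a) \<Rightarrow> 'a \<Rightarrow> 'a" where
  "shortcut m a t = t(m := m, a := a, t m := t a, t a := t m)"

definition detour :: "'a \<Rightarrow> 'a \<Rightarrow> 'a \<Rightarrow> ('a \<Rightarrow> 'a) \<Rightarrow> 'a \<Rightarrow> 'a" where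
  "detour m a b t = t(m := b, b := m, a := t b, t b := a)"

locale fpf_pair_at =
  fixes A :: "'a set" and s t :: "'a \<Rightarrow> 'a" and m :: 'a
  assumes s_fpf: "s \<in> fpf_involutions_on A"
    and t_fpf: "t \<in> fpf_involutions_on A"
    and m_in: "m \<in> A"
    and t_m_ne_s_m: "t m \<noteq> s m"
begin

lemma s_s [simp]: "s (s x) = x" and t_t [simp]: "t (t x) = x"
  using s_fpf t_fpf by (simp_all add: fpf_involution_twice)

lemma points_in: "s m \<in> A" "t m \<in> A" "t (s m) \<in> A"
  using m_in s_fpf t_fpf by (simp_all add: fpf_involution_in)

lemma points_distinct:
  "s m \<noteq> m" "t m \<noteq> m" "t m \<noteq> s m" "t (s m) \<noteq> s m" "t (s m) \<noteq> m" "t (s m) \<noteq> t m"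
proof -
  show "s m \<noteq> m" "t m \<noteq> m" "t (s m) \<noteq> s m"
    using m_in points_in s_fpf t_fpf by (simp_all add: fpf_involution_ne)
  show "t m \<noteq> s m" by (fact t_m_ne_s_m)
  show "t (s m) \<noteq> m" "t (s m) \<noteq> t m"
    using t_m_ne_s_m \<open>s m \<noteq> m\<close> by (metis t_t)+
qed

lemma shortcut_apply:
  "shortcut m (s m) t x =
     (if x = m \<or> x = s m then x else if x = t m then t (s m) else if x = t (s m) then t m else t x)"
  using points_distinct by (auto simp: shortcut_def)

lemma shortcut_fpf: "shortcut m (s m) t \<in> fpf_involutions_on (A - {m, s m})"
  unfolding fpf_involutions_on_iff
proof (intro conjI allI ballI impI)
  show "shortcut m (s m) t x = x" if "x \<notin> A - {m, s m}" for x
    using that points_in fpf_involution_outside[OF t_fpf] by (auto simp: shortcut_apply)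
  show "shortcut m (s m) t x \<noteq> x" if "x \<in> A - {m, s m}" for x
    using that points_distinct fpf_involution_ne[OF t_fpf] by (auto simp: shortcut_apply)
  show "shortcut m (s m) t (shortcut m (s m) t x) = x" for x
    using points_distinct by (auto simp: shortcut_apply) (metis t_t)+
qed

(* Each step of (s, t) becomes at most one step of the contracted pair after collapsing. *)
definition collapse :: "'a \<Rightarrow> 'a" where
  "collapse x = (if x = m then t m else if x = s m then t (s m) else x)"

lemma collapse_steps:
  assumes "(x, y) \<in> (steps {s, t})\<^sup>*"
  shows "(collapse x, collapse y) \<in> (steps {s(m := m, s m := s m), shortcut m (s m) t})\<^sup>*"
  using assms
proof (rule rtrancl_map)
  fix x y assume step: "(x, y) \<in> steps {s, t}"
  have s_ne: "s x \<noteq> m" "s x \<noteq> s m" if "x \<noteq> m" "x \<noteq> s m"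
    using that by (metis s_s)+
  have t_ne: "t x \<noteq> m" "t x \<noteq> s m" "t x \<noteq> t m" "t x \<noteq> t (s m)"
    if "x \<noteq> m" "x \<noteq> s m" "x \<noteq> t m" "x \<noteq> t (s m)"
    using that by (metis t_t)+
  have "collapse x = collapse y \<or>
      (collapse x, collapse y) \<in> steps {s(m := m, s m := s m), shortcut m (s m) t}"
    using step points_distinct s_ne t_ne by (auto simp: collapse_def shortcut_apply)
  then show "(collapse x, collapse y) \<in> (steps {s(m := m, s m := s m), shortcut m (s m) t})\<^sup>*"
    by auto
qed

lemma steps_shortcut_subset:
  "steps {s(m := m, s m := s m), shortcut m (s m) t} \<subseteq> (steps {s, t})\<^sup>*"
proof -
  have "(t m, m) \<in> steps {s, t}" "(m, s m) \<in> steps {s, t}" "(s m, t (s m)) \<in> steps {s, t}"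
    "(t (s m), s m) \<in> steps {s, t}" "(s m, m) \<in> steps {s, t}" "(m, t m) \<in> steps {s, t}"
    by (metis in_steps_iff insertCI s_s t_t)+
  then have "(t m, t (s m)) \<in> (steps {s, t})\<^sup>*" "(t (s m), t m) \<in> (steps {s, t})\<^sup>*"
    by (meson r_into_rtrancl rtrancl_into_rtrancl)+
  moreover have "(x, s x) \<in> (steps {s, t})\<^sup>*" "(x, t x) \<in> (steps {s, t})\<^sup>*" for x
    by (auto intro: r_into_rtrancl)
  ultimately show ?thesis
    by (auto simp: shortcut_apply)
qed

lemma connects_iff_shortcut:
  "connects A {s, t} \<longleftrightarrow> connects (A - {m, s m}) {s(m := m, s m := s m), shortcut m (s m) t}"
proof
  assume "connects A {s, t}"
  moreover have "collapse x = x" if "x \<in> A - {m, s m}" for x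
    using that by (simp add: collapse_def)
  ultimately show "connects (A - {m, s m}) {s(m := m, s m := s m), shortcut m (s m) t}"
    unfolding connects_def by (metis DiffD1 collapse_steps)
next
  assume contracted: "connects (A - {m, s m}) {s(m := m, s m := s m), shortcut m (s m) t}"
  show "connects A {s, t}"
    unfolding connects_def
  proof (intro ballI)
    fix x y assume "x \<in> A" "y \<in> A"
    then have "collapse x \<in> A - {m, s m}" "collapse y \<in> A - {m, s m}"
      using points_in points_distinct by (auto simp: collapse_def)
    then have "(collapse x, collapse y) \<in> (steps {s, t})\<^sup>*"
      using contracted steps_shortcut_subset rtrancl_subset_rtrancl unfolding connects_def by blast
    moreover have "(z, collapse z) \<in> (steps {s, t})\<^sup>*" "(collapse z, z) \<in> (steps {s, t})\<^sup>*" for z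
      by (auto simp: collapse_def intro!: r_into_rtrancl)
    ultimately show "(x, y) \<in> (steps {s, t})\<^sup>*"
      by (meson rtrancl_trans)
  qed
qed

lemma shortcut_in_transitive_pairs:
  "connects A {s, t} \<Longrightarrow>
     (s(m := m, s m := s m), shortcut m (s m) t) \<in> transitive_pairs (A - {m, s m})"
  using fpf_involutions_on_remove_2cycle[OF s_fpf] shortcut_fpf connects_iff_shortcut
  by (simp add: transitive_pairs_def)

lemma detour_shortcut: "detour m (s m) (t m) (shortcut m (s m) t) = t"
  using points_distinct by (auto simp: detour_def shortcut_apply fun_eq_iff)

end

lemma detour_apply:
  assumes t: "t \<in> fpf_involutions_on (A - {m, a})" and "a \<noteq> m" and b: "b \<in> A - {m, a}"
  shows "detour m a b t x =
    (if x = m then b else if x = b then m else if x = a then t b else if x = t b then a else t x)"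
proof -
  have "t b \<in> A - {m, a}" "t b \<noteq> b"
    using fpf_involution_in[OF t b] fpf_involution_ne[OF t b] by auto
  with assms show ?thesis
    by (auto simp: detour_def)
qed

lemma detour_fpf:
  assumes t: "t \<in> fpf_involutions_on (A - {m, a})" and m: "m \<in> A" and a: "a \<in> A" "a \<noteq> m"
    and b: "b \<in> A - {m, a}"
  shows "detour m a b t \<in> fpf_involutions_on A"
  unfolding fpf_involutions_on_iff
proof (intro conjI allI ballI impI)
  note d = detour_apply[OF t a(2) b]
  have tb: "t b \<in> A - {m, a}" "t b \<noteq> b"
    using fpf_involution_in[OF t b] fpf_involution_ne[OF t b] by auto
  have tm: "t m = m" "t a = a"
    using fpf_involution_outside[OF t] by auto
  have t_ne: "t x \<noteq> m" "t x \<noteq> a" "t x \<noteq> b" "t x \<noteq> t b"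
    if "x \<noteq> m" "x \<noteq> a" "x \<noteq> b" "x \<noteq> t b" for x
    using that tm fpf_involution_twice[OF t] by metis+
  fix x
  show "detour m a b t x = x" if "x \<notin> A"
    using that m a b tb fpf_involution_outside[OF t] by (auto simp: d)
  show "detour m a b t x \<noteq> x" if "x \<in> A"
    using that a b tb fpf_involution_ne[OF t] by (auto simp: d)
  show "detour m a b t (detour m a b t x) = x"
    using a b tb t_ne[of x] fpf_involution_twice[OF t] by (auto simp: d)
qed

lemma shortcut_detour:
  assumes t: "t \<in> fpf_involutions_on (A - {m, a})" and "a \<noteq> m" and b: "b \<in> A - {m, a}"
  shows "shortcut m a (detour m a b t) = t"
  using assms fpf_involution_outside[OF t] fpf_involution_twice[OF t]
  unfolding fun_eq_iff shortcut_def detour_apply[OF assms]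
  by auto

lemma detour_in_transitive_pairs:
  assumes st: "(s, t) \<in> transitive_pairs (A - {m, a})"
    and m: "m \<in> A" and a: "a \<in> A" "a \<noteq> m" and b: "b \<in> A - {m, a}"
  shows "(s(m := a, a := m), detour m a b t) \<in> transitive_pairs A"
proof -
  have s: "s \<in> fpf_involutions_on (A - {m, a})" and t: "t \<in> fpf_involutions_on (A - {m, a})"
    using st by (auto simp: transitive_pairs_def)
  have "detour m a b t m = b"
    by (simp add: detour_apply[OF t a(2) b])
  then interpret fpf_pair_at A "s(m := a, a := m)" "detour m a b t" m
    using fpf_involutions_on_add_2cycle[OF s m a] detour_fpf[OF t m a b] m b
    by unfold_locales auto
  have "s(m := a, a := m, m := m, a := a) = s"
    using fpf_involution_outside[OF s] by (auto simp: fun_eq_iff)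
  then have "connects A {s(m := a, a := m), detour m a b t}"
    using connects_iff_shortcut st shortcut_detour[OF t a(2) b] a(2)
    by (simp add: transitive_pairs_def)
  then show ?thesis
    using s_fpf t_fpf by (simp add: transitive_pairs_def)
qed

lemma not_connects_if_common_2cycle:
  assumes s: "s \<in> fpf_involutions_on A" and t: "t \<in> fpf_involutions_on A"
    and common: "t m = s m" and x: "x \<in> A" "x \<notin> {m, s m}" and m: "m \<in> A"
  shows "\<not> connects A {s, t}"
proof
  have "t (s m) = m"
    using common fpf_involution_twice[OF t] by metis
  then have "steps {s, t} `` {m, s m} \<subseteq> {m, s m}"
    using common fpf_involution_twice[OF s] by auto
  then have "(steps {s, t})\<^sup>* `` {m, s m} = {m, s m}"
    by (rule Image_closed_trancl)
  moreover assume "connects A {s, t}"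
  then have "(m, x) \<in> (steps {s, t})\<^sup>*"
    using m x by (simp add: connects_def)
  ultimately show False
    using x by blast
qed

lemma transitive_pairs_distinct_at:
  assumes "(s, t) \<in> transitive_pairs A" and "finite A" "card A \<ge> 3" "m \<in> A"
  shows "t m \<noteq> s m"
proof
  assume common: "t m = s m"
  have "card {m, s m} \<le> 2"
    by (simp add: card_insert_if)
  then have "\<not> A \<subseteq> {m, s m}"
    using assms card_mono[of "{m, s m}" A] by auto
  then obtain x where "x \<in> A" "x \<notin> {m, s m}" by blast
  with assms common show False
    using not_connects_if_common_2cycle by (fastforce simp: transitive_pairs_def)
qed

lemma bij_betw_transitive_pairs:
  assumes fin: "finite A" and card: "card A \<ge> 3" and m: "m \<in> A"
  shows "bij_betw (\<lambda>(s, t). (s m, t m, s(m := m, s m := s m), shortcut m (s m) t))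
           (transitive_pairs A) (SIGMA a:A-{m}. (A - {m, a}) \<times> transitive_pairs (A - {m, a}))"
    (is "bij_betw ?contract ?P ?Q")
proof -
  define expand where "expand = (\<lambda>(a, b, s, t). (s(m := a, a := m), detour m a b t))"
  have "?contract p \<in> ?Q \<and> expand (?contract p) = p" if "p \<in> ?P" for p
  proof -
    obtain s t where p: "p = (s, t)" and st: "(s, t) \<in> ?P"
      using \<open>p \<in> ?P\<close> by (cases p) auto
    then interpret fpf_pair_at A s t m
      using transitive_pairs_distinct_at[OF st fin card m] m
      by unfold_locales (auto simp: transitive_pairs_def)
    show ?thesis
      using p st points_in points_distinct shortcut_in_transitive_pairs
      by (auto simp: transitive_pairs_def expand_def detour_shortcut fun_eq_iff)
  qed
  moreover have "expand q \<in> ?P \<and> ?contract (expand q) = q" if "q \<in> ?Q" for q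
  proof -
    obtain a b s t where q: "q = (a, b, s, t)" and a: "a \<in> A" "a \<noteq> m" and b: "b \<in> A - {m, a}"
      and st: "(s, t) \<in> transitive_pairs (A - {m, a})"
      using \<open>q \<in> ?Q\<close> by (cases q) auto
    have s: "s \<in> fpf_involutions_on (A - {m, a})" and t: "t \<in> fpf_involutions_on (A - {m, a})"
      using st by (auto simp: transitive_pairs_def)
    have "s(m := a, a := m, m := m, a := a) = s"
      using fpf_involution_outside[OF s] by (auto simp: fun_eq_iff)
    then show ?thesis
      using q a detour_in_transitive_pairs[OF st m a b] shortcut_detour[OF t a(2) b]
      by (simp add: expand_def detour_apply[OF t a(2) b])
  qed
  ultimately show ?thesis
    by (intro bij_betw_byWitness[where f' = expand]) blast+
qed

lemma card_transitive_pairs_2: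
  assumes "card A = 2"
  shows "card (transitive_pairs A) = 1"
proof -
  obtain x y where A: "A = {x, y}" and "x \<noteq> y"
    using assms by (auto simp: card_2_iff)
  have "card (fpf_involutions_on A) = 1"
    using assms card_fpf_involutions_on[of A 1] A by simp
  then obtain w where w: "fpf_involutions_on A = {w}"
    by (auto simp: card_1_singleton_iff)
  then have "w \<in> fpf_involutions_on A" by simp
  then have "w x = y" "w y = x"
    using A \<open>x \<noteq> y\<close> fpf_involution_in fpf_involution_ne by fastforce+
  then have "(x, y) \<in> (steps {w})\<^sup>*" "(y, x) \<in> (steps {w})\<^sup>*"
    by (auto intro!: r_into_rtrancl)
  then have "connects A {w}"
    by (auto simp: connects_def A)
  with w have "transitive_pairs A = {(w, w)}"
    by (auto simp: transitive_pairs_def)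
  then show ?thesis by simp
qed

lemma card_transitive_pairs:
  "k \<ge> 1 \<Longrightarrow> finite A \<Longrightarrow> card A = 2 * k \<Longrightarrow> card (transitive_pairs A) = fact (2 * k - 1)"
proof (induction k arbitrary: A rule: nat_induct_at_least)
  case base
  then show ?case by (simp add: card_transitive_pairs_2)
next
  case (Suc k)
  obtain m where m: "m \<in> A"
    using Suc.prems by fastforce
  have card_rest: "card (A - {m, a}) = 2 * k" if "a \<in> A - {m}" for a
    using Suc.prems that m by (auto simp: card_Diff_subset)
  have "card (transitive_pairs A) = card (SIGMA a:A-{m}. (A - {m, a}) \<times> transitive_pairs (A - {m, a}))"
    using Suc bij_betw_same_card[OF bij_betw_transitive_pairs[OF _ _ m]] by simp
  also have "\<dots> = (\<Sum>a\<in>A-{m}. 2 * k * fact (2 * k - 1))"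
    using Suc card_rest by (subst card_SigmaI) (auto simp: card_cartesian_product intro: card_ge_0_finite)
  also have "\<dots> = (2 * k + 1) * (2 * k) * fact (2 * k - 1)"
    using Suc.prems m by (simp add: algebra_simps)
  also have "\<dots> = (2 * k + 1) * fact (2 * k)"
    using \<open>k \<ge> 1\<close> by (subst (2) fact_reduce) (auto simp: algebra_simps)
  also have "\<dots> = fact (2 * Suc k - 1)"
    by simp
  finally show ?case .
qed

definition wallis_ratio :: "nat \<Rightarrow> real" where
  "wallis_ratio k = (\<Prod>i=1..<k. 2 * real i / (2 * real i + 1))"

lemma wallis_ratio_Suc:
  "k \<ge> 1 \<Longrightarrow> wallis_ratio (Suc k) = wallis_ratio k * (2 * real k / (2 * real k + 1))"
  by (simp add: wallis_ratio_def prod.atLeastLessThan_Suc)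

lemma fact_div_prod_odd_squared_eq_wallis_ratio:
  "k \<ge> 1 \<Longrightarrow>
     fact (2 * k - 1) / (\<Prod>i<k. 2 * real i + 1) ^ 2 = wallis_ratio k"
proof (induction k rule: nat_induct_at_least)
  case base
  then show ?case by (simp add: wallis_ratio_def)
next
  case (Suc k)
  define Q where "Q = (\<Prod>i<k. 2 * real i + 1)"
  have "Q > 0"
    unfolding Q_def by (intro prod_pos) auto
  have "(fact (2 * k) :: real) = 2 * k * fact (2 * k - 1)"
    using Suc.hyps by (subst fact_reduce) auto
  then have "fact (2 * Suc k - 1) / (\<Prod>i<Suc k. 2 * real i + 1) ^ 2
      = (2 * real k + 1) * (2 * k) * fact (2 * k - 1) / (Q * (2 * k + 1)) ^ 2"
    by (simp add: Q_def algebra_simps)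
  also have "\<dots> = fact (2 * k - 1) / Q ^ 2 * (2 * k / (2 * k + 1))"
    using \<open>Q > 0\<close> by (simp add: divide_simps power2_eq_square)
  also have "\<dots> = wallis_ratio (Suc k)"
    using Suc by (simp add: Q_def wallis_ratio_Suc)
  finally show ?case .
qed

lemma p_trans_eq_wallis_ratio:
  assumes "k \<ge> 1"
  shows "p_trans k = wallis_ratio k"
proof -
  have "transitive_on (2 * k) (generated_group {s, t}) \<longleftrightarrow> connects {0..<2 * k} {s, t}"
    if "s \<in> fpf_involutions_on {0..<2 * k}" "t \<in> fpf_involutions_on {0..<2 * k}" for s t
    using that by (intro transitive_on_generated_group_iff) (auto simp: fpf_involution_comp_self)
  then have "{(s, t). s \<in> fpf_involutions (2 * k) \<and> t \<in> fpf_involutions (2 * k)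
        \<and> transitive_on (2 * k) (generated_group {s, t})} = transitive_pairs {0..<2 * k}"
    by (auto simp: transitive_pairs_def fpf_involutions_eq)
  then have "p_trans k = fact (2 * k - 1) / (\<Prod>i<k. 2 * real i + 1) ^ 2"
    using assms card_transitive_pairs[of k "{0..<2 * k}"] card_fpf_involutions_on[of "{0..<2 * k}" k]
    by (simp add: p_trans_def fpf_involutions_eq add.commute)
  then show ?thesis
    using fact_div_prod_odd_squared_eq_wallis_ratio[OF assms] by simp
qed

lemma wallis_ratio_squared_bounds:
  assumes "k \<ge> 1"
  shows "1 / (2 * real k - 1) \<le> wallis_ratio k ^ 2
    \<and> wallis_ratio k ^ 2 \<le> 1 / real k"
  using assms
proof (induction k rule: nat_induct_at_least)
  case base
  then show ?case by (simp add: wallis_ratio_def)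
next
  case (Suc k)
  define P where "P = wallis_ratio k ^ 2"
  define K where "K = real k"
  define r where "r = 4 * K^2 / (2 * K + 1)^2"
  have pos: "K > 0" "2 * K - 1 > 0" "2 * K + 1 > 0"
    using Suc.hyps by (simp_all add: K_def)
  have "r \<ge> 0"
    by (simp add: r_def)
  have "1 / (2 * K - 1) \<le> P" "P \<le> 1 / K"
    using Suc.IH by (simp_all add: P_def K_def)
  have "1 / (2 * (K + 1) - 1) \<le> 1 / (2 * K - 1) * r"
    using pos by (simp add: r_def divide_simps power2_eq_square) (simp add: algebra_simps)
  also have "\<dots> \<le> P * r"
    using \<open>1 / (2 * K - 1) \<le> P\<close> \<open>r \<ge> 0\<close> by (rule mult_right_mono)
  finally have lower: "1 / (2 * (K + 1) - 1) \<le> P * r" .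
  have "P * r \<le> 1 / K * r"
    using \<open>P \<le> 1 / K\<close> \<open>r \<ge> 0\<close> by (rule mult_right_mono)
  also have "\<dots> \<le> 1 / (K + 1)"
    using pos by (simp add: r_def divide_simps power2_eq_square) (simp add: algebra_simps)
  finally have upper: "P * r \<le> 1 / (K + 1)" .
  have "wallis_ratio (Suc k) ^ 2 = P * r"
    using Suc.hyps by (simp add: P_def K_def r_def wallis_ratio_Suc power_mult_distrib power_divide)
  with lower upper show ?case
    by (simp add: K_def add.commute)
qed

lemma p_trans_bounds:
  assumes k: "k \<ge> 1"
  shows "1/2 * real k powr (-1/2) \<le> p_trans k" and "p_trans k \<le> real k powr (-1/2)"
proof -
  have sq: "1 / (2 * real k - 1) \<le> p_trans k ^ 2" "p_trans k ^ 2 \<le> 1 / real k"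
    using wallis_ratio_squared_bounds[OF k] by (simp_all add: p_trans_eq_wallis_ratio[OF k])
  have powr: "real k powr (-1/2) = sqrt (1 / real k)"
    using k by (simp add: powr_minus_divide powr_half_sqrt real_sqrt_divide)
  show "p_trans k \<le> real k powr (-1/2)"
    using sq(2) unfolding powr by (rule real_le_rsqrt)
  have "p_trans k \<ge> 0"
    by (simp add: p_trans_def)
  have "1/2 * real k powr (-1/2) = sqrt (1 / (4 * real k))"
    unfolding powr by (simp add: real_sqrt_divide real_sqrt_mult)
  also have "\<dots> \<le> sqrt (1 / (2 * real k - 1))"
    using k by (intro real_sqrt_le_mono) (simp add: field_simps)
  also have "\<dots> \<le> p_trans k"
    using sq(1) by (rule real_le_lsqrt[OF \<open>p_trans k \<ge> 0\<close>])
  finally show "1/2 * real k powr (-1/2) \<le> p_trans k" .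
qed

theorem lemma2p1:
  shows "\<exists>a b :: real. 0 < a \<and> a < b \<and>
    (\<forall>k::nat. k \<ge> 1 \<longrightarrow>
       a * real k powr (-1/2) \<le> p_trans k \<and> p_trans k \<le> b * real k powr (-1/2))"
  using p_trans_bounds by (intro exI[of _ "1/2"] exI[of _ 1]) auto

end
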